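(* Let $n\in\mathbb{N}$, let $A\subset\mathbb{R}$, let $a\in\mathbb{R}$ with $a\notin\overline{A}$ (the closure of $A$), and let $f:A\cup\{a\}\to\mathbb{R}$. Suppose that for every $k\in\{1,\dots,n\}$ the set $\{[x_1,\dots,x_k;f] : x_1,\dots,x_k\in A \text{ pairwise distinct}\}$ is bounded. Then for every $k\in\{1,\dots,n\}$ the set $\{[x_1,\dots,x_k;f] : x_1,\dots,x_k\in A\cup\{a\} \text{ pairwise distinct}\}$ is bounded.
   Context: For a function $f$ and pairwise distinct points $x_1,\dots,x_m$ of its domain, divided differences are defined recursively by $[x_1;f]:=f(x_1)$ and $[x_1,\dots,x_{m+1};f]:=\dfrac{[x_2,\dots,x_{m+1};f]-[x_1,\dots,x_m;f]}{x_{m+1}-x_1}$; they are symmetric functions of the points. *)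

theory Defs
  imports "HOL-Analysis.Analysis"
begin

text \<open>The empty list is given the junk value 0 (never used).\<close>
function divdiff :: "real list \<Rightarrow> (real \<Rightarrow> real) \<Rightarrow> real" where
  "divdiff [] f = 0"
| "divdiff [x] f = f x"
| "divdiff (x # y # ys) f =
     (divdiff (y # ys) f - divdiff (butlast (x # y # ys)) f) / (last (y # ys) - x)"
  by pat_completeness auto
termination
  by (relation "Wellfounded.measure (\<lambda>(xs, f). length xs)") auto

definition divdiff_set :: "nat \<Rightarrow> real set \<Rightarrow> (real \<Rightarrow> real) \<Rightarrow> real set" where
  "divdiff_set k S f = {divdiff xs f | xs. length xs = k \<and> distinct xs \<and> set xs \<subseteq> S}"

end

theory Submission
  imports Defs
begin

text \<open>Divided differences at distinct points are given by the symmetric formula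
  \<open>[x\<^sub>1,\<dots>,x\<^sub>k;f] = \<Sum>\<^sub>i f x\<^sub>i / \<Prod>\<^sub>j\<^sub>\<noteq>\<^sub>i (x\<^sub>i - x\<^sub>j)\<close>, so they depend only on the set of points.
  Any set containing \<open>a\<close> and at least one other point \<open>b \<in> A\<close> can therefore be ordered as
  \<open>a, R, b\<close>, and the recurrence gives
  \<open>|b - a| \<cdot> |[a,R,b;f]| \<le> |[R,b;f]| + |[a,R;f]|\<close>. Since \<open>a\<close> has positive distance \<open>e\<close> from \<open>A\<close>,
  the divided differences of order \<open>k + 1\<close> on \<open>A \<union> {a}\<close> are bounded by those of order \<open>k\<close>
  on \<open>A\<close> and on \<open>A \<union> {a}\<close> divided by \<open>e\<close>; induction on \<open>k\<close> concludes.\<close>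

definition divdiff_of_set :: "real set \<Rightarrow> (real \<Rightarrow> real) \<Rightarrow> real" where
  "divdiff_of_set T f = (\<Sum>u\<in>T. f u / (\<Prod>y\<in>T - {u}. u - y))"

lemma divdiff_of_set_insert_insert:
  assumes "finite S" "x \<notin> S" "z \<notin> S" "x \<noteq> z"
  shows "(z - x) * divdiff_of_set (insert x (insert z S)) f
           = divdiff_of_set (insert z S) f - divdiff_of_set (insert x S) f"
proof -
  define U where "U = insert x (insert z S)"
  \<comment> \<open>extend the summands by zero, so that all three sums run over \<open>U\<close>\<close>
  define c where "c T u = (if u \<in> T then f u / (\<Prod>y\<in>T - {u}. u - y) else 0)" for T u
  have extend: "divdiff_of_set T f = (\<Sum>u\<in>U. c T u)" if "T \<subseteq> U" for T
  proof -
    have "finite U" using assms by (simp add: U_def)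
    then show ?thesis
      using that unfolding divdiff_of_set_def c_def by (simp add: sum.inter_restrict [symmetric] Int_absorb1)
  qed
  have summand: "(z - x) * c U u = c (insert z S) u - c (insert x S) u" for u
  proof -
    consider "u = x" | "u = z" | "u \<in> S" | "u \<notin> U" unfolding U_def by blast
    then show ?thesis
    proof cases
      case 1
      with assms show ?thesis by (simp add: c_def U_def insert_Diff_if field_simps)
    next
      case 2
      with assms show ?thesis by (simp add: c_def U_def insert_Diff_if field_simps)
    next
      case 3
      have "(\<Prod>y\<in>S - {u}. u - y) \<noteq> 0" using assms by simp
      with 3 assms show ?thesis by (auto simp add: c_def U_def insert_Diff_if field_simps)
    next
      case 4
      then show ?thesis by (simp add: c_def U_def)
    qed
  qed
  have "(z - x) * divdiff_of_set U f = (\<Sum>u\<in>U. c (insert z S) u - c (insert x S) u)"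
    by (simp add: extend sum_distrib_left summand)
  also have "\<dots> = divdiff_of_set (insert z S) f - divdiff_of_set (insert x S) f"
    by (simp add: sum_subtractf extend U_def subset_insertI2)
  finally show ?thesis by (simp only: U_def)
qed

lemma divdiff_eq_divdiff_of_set:
  "distinct xs \<Longrightarrow> divdiff xs f = divdiff_of_set (set xs) f"
proof (induction xs f rule: divdiff.induct)
  case (1 f)
  then show ?case by (simp add: divdiff_of_set_def)
next
  case (2 x f)
  then show ?case by (simp add: divdiff_of_set_def)
next
  case (3 x y ys f)
  define z where "z = last (y # ys)"
  define m where "m = butlast (y # ys)"
  have yys: "y # ys = m @ [z]" and butlast: "butlast (x # y # ys) = x # m"
    by (simp_all add: z_def m_def)
  have dist: "distinct (x # m @ [z])" using "3.prems" yys by simp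
  have "divdiff (y # ys) f = divdiff_of_set (insert z (set m)) f"
    using "3.IH"(1) dist unfolding yys by simp
  moreover have "divdiff (butlast (x # y # ys)) f = divdiff_of_set (insert x (set m)) f"
    using "3.IH"(2) dist unfolding butlast by simp
  ultimately have "divdiff (x # y # ys) f
      = (divdiff_of_set (insert z (set m)) f - divdiff_of_set (insert x (set m)) f) / (z - x)"
    by (simp only: divdiff.simps z_def)
  also have "\<dots> = divdiff_of_set (insert x (insert z (set m))) f"
  proof -
    have "z - x \<noteq> 0" using dist by auto
    then show ?thesis
      using divdiff_of_set_insert_insert[of "set m" x z f] dist
      by (simp add: nonzero_divide_eq_eq mult.commute)
  qed
  finally show ?case using yys by (simp add: insert_commute)
qed

lemma divdiff_set_eq_image:
  "divdiff_set k S f = (\<lambda>T. divdiff_of_set T f) ` {T. T \<subseteq> S \<and> finite T \<and> card T = k}"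
proof (rule set_eqI)
  fix d
  have "(\<exists>xs. d = divdiff xs f \<and> length xs = k \<and> distinct xs \<and> set xs \<subseteq> S)
          \<longleftrightarrow> (\<exists>T. d = divdiff_of_set T f \<and> T \<subseteq> S \<and> finite T \<and> card T = k)"
  proof
    assume "\<exists>xs. d = divdiff xs f \<and> length xs = k \<and> distinct xs \<and> set xs \<subseteq> S"
    then obtain xs where "d = divdiff xs f" "length xs = k" "distinct xs" "set xs \<subseteq> S"
      by blast
    then show "\<exists>T. d = divdiff_of_set T f \<and> T \<subseteq> S \<and> finite T \<and> card T = k"
      by (intro exI[of _ "set xs"]) (simp add: distinct_card divdiff_eq_divdiff_of_set)
  next
    assume "\<exists>T. d = divdiff_of_set T f \<and> T \<subseteq> S \<and> finite T \<and> card T = k"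
    then obtain T xs where "d = divdiff_of_set T f" "T \<subseteq> S" "card T = k" "set xs = T" "distinct xs"
      using finite_distinct_list by blast
    then show "\<exists>xs. d = divdiff xs f \<and> length xs = k \<and> distinct xs \<and> set xs \<subseteq> S"
      by (intro exI[of _ xs]) (auto simp: distinct_card divdiff_eq_divdiff_of_set)
  qed
  then show "d \<in> divdiff_set k S f \<longleftrightarrow> d \<in> (\<lambda>T. divdiff_of_set T f) ` {T. T \<subseteq> S \<and> finite T \<and> card T = k}"
    unfolding divdiff_set_def by blast
qed

lemma abs_divdiff_of_set_insert_le:
  assumes "finite R" "a \<notin> R" "b \<in> R" "0 < e" "e \<le> \<bar>b - a\<bar>"
  shows "\<bar>divdiff_of_set (insert a R) f\<bar>
           \<le> (\<bar>divdiff_of_set R f\<bar> + \<bar>divdiff_of_set (insert a (R - {b})) f\<bar>) / e"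
proof -
  have recurrence: "(b - a) * divdiff_of_set (insert a R) f
          = divdiff_of_set R f - divdiff_of_set (insert a (R - {b})) f"
    using divdiff_of_set_insert_insert[of "R - {b}" a b f] assms by (auto simp: insert_absorb)
  have "e * \<bar>divdiff_of_set (insert a R) f\<bar> \<le> \<bar>b - a\<bar> * \<bar>divdiff_of_set (insert a R) f\<bar>"
    using assms(5) by (rule mult_right_mono) simp
  also have "\<dots> = \<bar>divdiff_of_set R f - divdiff_of_set (insert a (R - {b})) f\<bar>"
    by (simp only: abs_mult [symmetric] recurrence)
  also have "\<dots> \<le> \<bar>divdiff_of_set R f\<bar> + \<bar>divdiff_of_set (insert a (R - {b})) f\<bar>"
    by (rule abs_triangle_ineq4)
  finally show ?thesis using assms(4) by (simp add: field_simps)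
qed

lemma bounded_divdiff_set_iff:
  "bounded (divdiff_set k S f) \<longleftrightarrow>
     (\<exists>M. \<forall>T. T \<subseteq> S \<longrightarrow> finite T \<longrightarrow> card T = k \<longrightarrow> \<bar>divdiff_of_set T f\<bar> \<le> M)"
  by (auto simp: divdiff_set_eq_image bounded_iff)

lemma bounded_divdiff_set_insert_Suc:
  assumes "a \<notin> closure A"
    and "bounded (divdiff_set (Suc k) A f)" "bounded (divdiff_set k A f)"
    and "bounded (divdiff_set k (insert a A) f)"
  shows "bounded (divdiff_set (Suc k) (insert a A) f)"
proof -
  obtain e where "e > 0" and "\<forall>b\<in>A. \<not> dist b a < e"
    using assms(1) unfolding closure_approachable by blast
  then have e: "e \<le> \<bar>b - a\<bar>" if "b \<in> A" for b
    using that by (force simp: dist_real_def)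
  obtain M where M: "\<And>T. T \<subseteq> A \<Longrightarrow> finite T \<Longrightarrow> card T = Suc k \<Longrightarrow> \<bar>divdiff_of_set T f\<bar> \<le> M"
    using assms(2) by (auto simp: bounded_divdiff_set_iff)
  obtain M' where M': "\<And>T. T \<subseteq> A \<Longrightarrow> finite T \<Longrightarrow> card T = k \<Longrightarrow> \<bar>divdiff_of_set T f\<bar> \<le> M'"
    using assms(3) by (auto simp: bounded_divdiff_set_iff)
  obtain N where N: "\<And>T. T \<subseteq> insert a A \<Longrightarrow> finite T \<Longrightarrow> card T = k \<Longrightarrow> \<bar>divdiff_of_set T f\<bar> \<le> N"
    using assms(4) by (auto simp: bounded_divdiff_set_iff)
  have "\<bar>divdiff_of_set T f\<bar> \<le> max M (max \<bar>f a\<bar> ((M' + N) / e))"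
    if T: "T \<subseteq> insert a A" "finite T" "card T = Suc k" for T
  proof (cases "a \<in> T")
    case False
    with T have "T \<subseteq> A" by blast
    with M T have "\<bar>divdiff_of_set T f\<bar> \<le> M" by blast
    then show ?thesis by simp
  next
    case True
    define R where "R = T - {a}"
    have TR: "T = insert a R" "a \<notin> R" "R \<subseteq> A" "finite R" "card R = k"
      using True T by (auto simp: R_def)
    show ?thesis
    proof (cases "R = {}")
      case True
      then show ?thesis using TR by (simp add: divdiff_of_set_def)
    next
      case False
      then obtain b where "b \<in> R" by blast
      have "card (insert a (R - {b})) = k"
        using TR \<open>b \<in> R\<close> card_Suc_Diff1[of R b] by simp
      then have "\<bar>divdiff_of_set (insert a (R - {b})) f\<bar> \<le> N"
        by (intro N) (use TR in auto)
      moreover have "\<bar>divdiff_of_set R f\<bar> \<le> M'"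
        using M' TR by blast
      moreover have "\<bar>divdiff_of_set T f\<bar>
          \<le> (\<bar>divdiff_of_set R f\<bar> + \<bar>divdiff_of_set (insert a (R - {b})) f\<bar>) / e"
        unfolding TR(1) using abs_divdiff_of_set_insert_le e \<open>e > 0\<close> TR \<open>b \<in> R\<close> by blast
      ultimately have "\<bar>divdiff_of_set T f\<bar> \<le> (M' + N) / e"
        using \<open>e > 0\<close> by (smt (verit) divide_right_mono)
      then show ?thesis by simp
    qed
  qed
  then show ?thesis by (auto simp: bounded_divdiff_set_iff)
qed

lemma bounded_divdiff_set_0: "bounded (divdiff_set 0 S f)"
  by (auto simp: bounded_divdiff_set_iff divdiff_of_set_def)

theorem lemma1:
  fixes n :: nat and A :: "real set" and a :: real and f :: "real \<Rightarrow> real"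
  assumes "a \<notin> closure A"
    and "\<forall>k\<in>{1..n}. bounded (divdiff_set k A f)"
  shows "\<forall>k\<in>{1..n}. bounded (divdiff_set k (A \<union> {a}) f)"
proof -
  have bounded_A: "bounded (divdiff_set k A f)" if "k \<le> n" for k
    using assms(2) that bounded_divdiff_set_0 by (cases k) auto
  have "k \<le> n \<Longrightarrow> bounded (divdiff_set k (insert a A) f)" for k
  proof (induction k)
    case 0
    show ?case by (rule bounded_divdiff_set_0)
  next
    case (Suc k)
    then show ?case
      using bounded_divdiff_set_insert_Suc[OF assms(1)] bounded_A by simp
  qed
  then show ?thesis by simp
qed

end
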